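(* Let $\xi_1,\xi_2,\dots$ be i.i.d. $N(0,1)$, let $0<\alpha<1$ and let $x_\alpha$ be defined by $\mathbf{P}\big(\pi^{-2}\sum_{j\ge1}\xi_j^2j^{-2}>x_\alpha\big)=\alpha$. Let $\boldsymbol\eta=(\eta_j)_{j\ge1}$ be a real square-summable sequence with $\pi^{-2}\sum_{j\ge1}\eta_j^2>c$ for some $c>0$. Then $$\mathbf{P}\Big(\pi^{-2}\sum_{j=1}^\infty\xi_j^2j^{-2}<x_\alpha\Big)>\mathbf{P}\Big(\pi^{-2}\sum_{j=1}^\infty(\xi_j/j+\eta_j)^2<x_\alpha\Big).$$ *)

theory Defs
  imports "HOL-Probability.Probability"
begin

text \<open>The random series \<pi>^-2 * sum_{j>=1} (xi_j / j + eta_j)^2, with the paper's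
  indexing j = 1, 2, ... (the summation index k = j - 1 runs over all naturals).\<close>
definition shifted_series :: "(nat \<Rightarrow> 'a \<Rightarrow> real) \<Rightarrow> (nat \<Rightarrow> real) \<Rightarrow> 'a \<Rightarrow> real" where
  "shifted_series \<xi> \<eta> \<omega> =
     (1 / pi\<^sup>2) * (\<Sum>k. (\<xi> (Suc k) \<omega> / real (Suc k) + \<eta> (Suc k))\<^sup>2)"

end

theory Submission
  imports Defs
begin

text \<open>
  For a standard normal \<open>X\<close>, \<open>b \<noteq> 0\<close> and \<open>r > 0\<close> we have
  \<open>P(\<bar>X + b\<bar> \<le> r) < P(\<bar>X\<bar> < r)\<close>: the reflection \<open>t \<mapsto> -b - t\<close> maps the part of the
  shifted interval outside \<open>[-r, r]\<close> onto the part of \<open>[-r, r]\<close> it misses, where the density,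
  being even and strictly decreasing in \<open>\<bar>t\<bar>\<close>, is larger.  By independence, conditioning on
  all coordinates but one shows that removing the shift of a single coordinate of
  \<open>\<Sum>k. (X\<^sub>k / d\<^sub>k + a\<^sub>k)\<^sup>2\<close> cannot decrease the probability that a partial sum is \<open>< x\<close>.
  Removing all shifts but the one at a coordinate \<open>j\<close> with \<open>a\<^sub>j \<noteq> 0\<close> and letting the number
  of terms tend to infinity reduces the theorem to a single shifted coordinate.  Conditioning
  once more, the strict one-dimensional inequality applies whenever the remaining coordinates
  contribute less than \<open>x\<close>, an event of positive probability because
  \<open>P(S\<^sub>0 \<le> x\<^sub>\<alpha>) = 1 - \<alpha> > 0\<close>.
\<close>

lemma sq_le_iff_abs_le_sqrt: "y\<^sup>2 \<le> s \<longleftrightarrow> \<bar>y\<bar> \<le> sqrt s"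
  by (metis real_sqrt_abs real_sqrt_le_iff)

lemma sq_less_iff_abs_less_sqrt: "y\<^sup>2 < s \<longleftrightarrow> \<bar>y\<bar> < sqrt s"
  by (metis real_sqrt_abs real_sqrt_less_iff)

lemma emeasure_distributed_eq_nn_integral:
  fixes f :: "'b \<Rightarrow> real"
  assumes "distributed M N X f" "{t. P t} \<in> sets N"
  shows "emeasure M {\<omega> \<in> space M. P (X \<omega>)} = (\<integral>\<^sup>+t. ennreal (f t) * indicator {t. P t} t \<partial>N)"
  using distributed_emeasure[OF assms(1), of "{t. P t}"] assms(2) by (simp add: vimage_def Int_def conj_commute)

lemma nn_integral_strict_mono_on_set:
  assumes [measurable]: "f \<in> borel_measurable M" "g \<in> borel_measurable M"
    and finite: "(\<integral>\<^sup>+x. f x \<partial>M) \<noteq> \<infinity>"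
    and le: "\<And>x. x \<in> space M \<Longrightarrow> f x \<le> g x"
    and A: "A \<in> sets M" "emeasure M A \<noteq> 0"
    and less: "\<And>x. x \<in> A \<Longrightarrow> f x < g x"
  shows "(\<integral>\<^sup>+x. f x \<partial>M) < (\<integral>\<^sup>+x. g x \<partial>M)"
proof (rule nn_integral_less)
  show "AE x in M. f x \<le> g x" using le by (rule AE_I2)
  show "\<not> (AE x in M. g x \<le> f x)"
  proof
    assume "AE x in M. g x \<le> f x"
    then have "AE x in M. x \<notin> A" by eventually_elim (use less in force)
    then have "emeasure M {x \<in> space M. x \<in> A} = 0" by (rule emeasure_eq_0_AE)
    moreover have "{x \<in> space M. x \<in> A} = A" using sets.sets_into_space[OF A(1)] by auto
    ultimately show False using A(2) by simp
  qed
qed fact+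

lemma summable_fun_upd_iff:
  fixes f :: "nat \<Rightarrow> 'a::real_normed_vector"
  shows "summable (f(j := y)) \<longleftrightarrow> summable f"
  by (rule summable_cong, rule eventually_mono[OF eventually_gt_at_top[of j]]) simp

lemma suminf_eq_add_suminf_fun_upd_zero:
  fixes f :: "nat \<Rightarrow> 'a::real_normed_vector"
  assumes "summable f"
  shows "suminf f = f j + suminf (f(j := 0))"
proof -
  have "f(j := 0) = (\<lambda>i. f i - (if i = j then f i else 0))" by auto
  then have "suminf (f(j := 0)) = suminf f - (\<Sum>i. if i = j then f i else 0)"
    using suminf_diff[OF assms summable_single[of j f]] by simp
  also have "(\<Sum>i. if i = j then f i else 0) = f j"
    using sums_single[of j f] by (rule sums_unique[symmetric])
  finally show ?thesis by (simp add: fun_upd_def)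
qed

lemma (in prob_space) indep_sets_reindex:
  assumes h: "inj_on h I" and indep: "indep_sets F (h ` I)"
  shows "indep_sets (\<lambda>i. F (h i)) I"
proof (rule indep_setsI)
  show "F (h i) \<subseteq> events" if "i \<in> I" for i
    using indep that unfolding indep_sets_def by blast
  fix A J assume J: "J \<noteq> {}" "J \<subseteq> I" "finite J" and A: "\<forall>j\<in>J. A j \<in> F (h j)"
  have inj_J: "inj_on h J" using h J(2) by (rule inj_on_subset)
  define B where "B k = A (the_inv_into J h k)" for k
  have B_h: "B (h j) = A j" if "j \<in> J" for j
    using the_inv_into_f_f[OF inj_J that] by (simp add: B_def)
  have "prob (\<Inter>k\<in>h ` J. B k) = (\<Prod>k\<in>h ` J. prob (B k))"
    using J A B_h by (intro indep_setsD[OF indep]) auto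
  then show "prob (\<Inter>j\<in>J. A j) = (\<Prod>j\<in>J. prob (A j))"
    using B_h by (simp add: prod.reindex[OF inj_J] cong: INF_cong prod.cong)
qed

lemma (in prob_space) indep_vars_reindex:
  assumes "inj_on h I" and "indep_vars M' X (h ` I)"
  shows "indep_vars (\<lambda>i. M' (h i)) (\<lambda>i. X (h i)) I"
  using assms indep_sets_reindex[OF assms(1), of "\<lambda>i. {X i -` A \<inter> space M | A. A \<in> sets (M' i)}"]
  unfolding indep_vars_def2 by auto

lemma (in prob_space) emeasure_indep_var_eq_nn_integral:
  assumes indep: "indep_var N W N' Z"
    and Q: "{p \<in> space (N \<Otimes>\<^sub>M N'). Q (fst p) (snd p)} \<in> sets (N \<Otimes>\<^sub>M N')"
  shows "emeasure M {\<omega> \<in> space M. Q (W \<omega>) (Z \<omega>)}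
       = (\<integral>\<^sup>+w. emeasure M {\<omega> \<in> space M. Q w (Z \<omega>)} \<partial>distr M N W)"
proof -
  have W[measurable]: "W \<in> measurable M N" using indep by (rule indep_var_rv1)
  have Z[measurable]: "Z \<in> measurable M N'" using indep by (rule indep_var_rv2)
  define A where "A = {p \<in> space (N \<Otimes>\<^sub>M N'). Q (fst p) (snd p)}"
  have A_sets[measurable]: "A \<in> sets (N \<Otimes>\<^sub>M N')" using Q unfolding A_def .
  interpret Z_distr: prob_space "distr M N' Z" by (rule prob_space_distr) simp
  have "emeasure M {\<omega> \<in> space M. Q (W \<omega>) (Z \<omega>)}
      = emeasure (distr M (N \<Otimes>\<^sub>M N') (\<lambda>\<omega>. (W \<omega>, Z \<omega>))) A"
    using measurable_space[OF W] measurable_space[OF Z]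
    by (subst emeasure_distr[OF measurable_Pair[OF W Z] A_sets])
       (auto simp: A_def space_pair_measure intro!: arg_cong[where f = "emeasure M"])
  also have "\<dots> = emeasure (distr M N W \<Otimes>\<^sub>M distr M N' Z) A"
    using indep by (simp add: indep_var_distribution_eq)
  also have "\<dots> = (\<integral>\<^sup>+w. emeasure (distr M N' Z) (Pair w -` A) \<partial>distr M N W)"
    by (rule Z_distr.emeasure_pair_measure_alt) (simp cong: sets_pair_measure_cong)
  also have "\<dots> = (\<integral>\<^sup>+w. emeasure M {\<omega> \<in> space M. Q w (Z \<omega>)} \<partial>distr M N W)"
  proof (rule nn_integral_cong)
    fix w assume "w \<in> space (distr M N W)"
    then show "emeasure (distr M N' Z) (Pair w -` A) = emeasure M {\<omega> \<in> space M. Q w (Z \<omega>)}"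
      using measurable_space[OF Z] sets_Pair1[OF A_sets, of w]
      by (subst emeasure_distr) (auto simp: A_def space_pair_measure intro!: arg_cong[where f = "emeasure M"])
  qed
  finally show ?thesis .
qed

section \<open>Anderson's inequality in dimension one\<close>

locale symmetric_unimodal_density =
  fixes f :: "real \<Rightarrow> real"
  assumes borel_measurable_density[measurable]: "f \<in> borel_measurable borel"
    and density_nonneg: "0 \<le> f t"
    and density_even: "f (- t) = f t"
    and density_strict_decreasing: "\<bar>u\<bar> < \<bar>v\<bar> \<Longrightarrow> f v < f u"
begin

lemma density_le_at_zero: "f t \<le> f 0"
  using density_strict_decreasing[of 0 t] by (cases "t = 0") auto

lemma nn_integral_shifted_interval_less_pos:
  assumes b: "0 < b" and r: "0 < r"
  shows "(\<integral>\<^sup>+t. ennreal (f t) * indicator {t. \<bar>t + b\<bar> < r} t \<partial>lborel)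
       < (\<integral>\<^sup>+t. ennreal (f t) * indicator {t. \<bar>t\<bar> < r} t \<partial>lborel)"
proof -
  define A where "A = {t::real. \<bar>t + b\<bar> < r}"
  define B where "B = {t::real. \<bar>t\<bar> < r}"
  have [measurable]: "A \<in> sets borel" "B \<in> sets borel" unfolding A_def B_def by measurable
  have B_eq: "B = {-r<..<r}" unfolding B_def by auto
  have decreasing_on_B_minus_A: "f (t + b) < f t" if "t \<in> B - A" for t
    using that density_strict_decreasing[of t "t + b"] unfolding A_def B_def by auto
  define g where
    "g t = ennreal (f t) * indicator (A \<inter> B) t + ennreal (f (t + b)) * indicator (B - A) t" for t
  have "(\<integral>\<^sup>+t. ennreal (f t) * indicator A t \<partial>lborel)
      = (\<integral>\<^sup>+t. ennreal (f t) * indicator (A \<inter> B) t \<partial>lborel)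
        + (\<integral>\<^sup>+t. ennreal (f t) * indicator (A - B) t \<partial>lborel)"
    by (subst nn_integral_add[symmetric]) (auto intro!: nn_integral_cong split: split_indicator)
  also have "(\<integral>\<^sup>+t. ennreal (f t) * indicator (A - B) t \<partial>lborel)
      = (\<integral>\<^sup>+t. ennreal (f (t + b)) * indicator (B - A) t \<partial>lborel)"
    \<comment> \<open>the reflection \<open>t \<mapsto> -b - t\<close> maps \<open>B - A\<close> onto \<open>A - B\<close>\<close>
  proof -
    have "(\<integral>\<^sup>+t. ennreal (f t) * indicator (A - B) t \<partial>lborel)
        = (\<integral>\<^sup>+t. ennreal (f (-b + (-1) * t)) * indicator (A - B) (-b + (-1) * t) \<partial>lborel)"
      using nn_integral_real_affine[of "\<lambda>t. ennreal (f t) * indicator (A - B) t" "-1" "-b"] by simp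
    also have "\<dots> = (\<integral>\<^sup>+t. ennreal (f (t + b)) * indicator (B - A) t \<partial>lborel)"
      using density_even[of "t + b" for t]
      by (intro nn_integral_cong) (auto simp: A_def B_def add.commute split: split_indicator)
    finally show ?thesis .
  qed
  also have "(\<integral>\<^sup>+t. ennreal (f t) * indicator (A \<inter> B) t \<partial>lborel)
      + (\<integral>\<^sup>+t. ennreal (f (t + b)) * indicator (B - A) t \<partial>lborel) = (\<integral>\<^sup>+t. g t \<partial>lborel)"
    unfolding g_def by (rule nn_integral_add[symmetric]) auto
  also have "\<dots> < (\<integral>\<^sup>+t. ennreal (f t) * indicator B t \<partial>lborel)"
  proof (rule nn_integral_strict_mono_on_set[where A = "{max (-r) (r - b) <..< r}"])
    have "g t \<le> ennreal (f t) * indicator B t" for t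
      using decreasing_on_B_minus_A[of t]
      by (auto simp: g_def ennreal_leI less_imp_le split: split_indicator)
    then show "g t \<le> ennreal (f t) * indicator B t" for t .
    have "g t \<le> ennreal (f 0) * indicator B t" for t
      using density_le_at_zero[of t] density_le_at_zero[of "t + b"]
      by (auto simp: g_def ennreal_leI split: split_indicator)
    then have "(\<integral>\<^sup>+t. g t \<partial>lborel) \<le> (\<integral>\<^sup>+t. ennreal (f 0) * indicator B t \<partial>lborel)"
      by (rule nn_integral_mono)
    also have "\<dots> = ennreal (f 0) * emeasure lborel B"
      by (rule nn_integral_cmult_indicator) simp
    also have "\<dots> < \<infinity>" using r by (simp add: B_eq ennreal_mult_less_top)
    finally show "(\<integral>\<^sup>+t. g t \<partial>lborel) \<noteq> \<infinity>" by simp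
    show "emeasure lborel {max (-r) (r - b) <..< r} \<noteq> 0" using b r by simp
    show "g t < ennreal (f t) * indicator B t" if "t \<in> {max (-r) (r - b) <..< r}" for t
    proof -
      have "t \<in> B - A" using that b unfolding A_def B_def by auto
      then show ?thesis
        using decreasing_on_B_minus_A[of t] density_nonneg[of "t + b"]
        by (auto simp: g_def ennreal_less_iff split: split_indicator)
    qed
  qed (auto simp: g_def)
  finally show ?thesis unfolding A_def B_def .
qed

lemma nn_integral_shifted_interval_less:
  assumes b: "b \<noteq> 0" and r: "0 < r"
  shows "(\<integral>\<^sup>+t. ennreal (f t) * indicator {t. \<bar>t + b\<bar> < r} t \<partial>lborel)
       < (\<integral>\<^sup>+t. ennreal (f t) * indicator {t. \<bar>t\<bar> < r} t \<partial>lborel)"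
proof (cases "0 < b")
  case False
  have "(\<integral>\<^sup>+t. ennreal (f t) * indicator {t. \<bar>t + b\<bar> < r} t \<partial>lborel)
      = (\<integral>\<^sup>+t. ennreal (f (0 + (-1) * t)) * indicator {t. \<bar>t + b\<bar> < r} (0 + (-1) * t) \<partial>lborel)"
    using nn_integral_real_affine[of "\<lambda>t. ennreal (f t) * indicator {t. \<bar>t + b\<bar> < r} t" "-1" 0]
    by simp
  also have "\<dots> = (\<integral>\<^sup>+t. ennreal (f t) * indicator {t. \<bar>t + (- b)\<bar> < r} t \<partial>lborel)"
    by (intro nn_integral_cong) (simp add: density_even abs_minus_commute split: split_indicator)
  also have "\<dots> < (\<integral>\<^sup>+t. ennreal (f t) * indicator {t. \<bar>t\<bar> < r} t \<partial>lborel)"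
    using False b r by (intro nn_integral_shifted_interval_less_pos) auto
  finally show ?thesis .
qed (use r nn_integral_shifted_interval_less_pos in blast)

lemma nn_integral_closed_interval_eq_open:
  "(\<integral>\<^sup>+t. ennreal (f t) * indicator {t. \<bar>t + b\<bar> \<le> r} t \<partial>lborel)
     = (\<integral>\<^sup>+t. ennreal (f t) * indicator {t. \<bar>t + b\<bar> < r} t \<partial>lborel)"
proof (rule nn_integral_cong_AE)
  have "AE t in lborel. t \<noteq> r - b" "AE t in lborel. t \<noteq> - r - b"
    by (rule AE_lborel_singleton)+
  then show "AE t in lborel. ennreal (f t) * indicator {t. \<bar>t + b\<bar> \<le> r} t
      = ennreal (f t) * indicator {t. \<bar>t + b\<bar> < r} t"
    by eventually_elim (auto split: split_indicator)
qed

lemma nn_integral_shifted_interval_le: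
  "(\<integral>\<^sup>+t. ennreal (f t) * indicator {t. \<bar>t + b\<bar> \<le> r} t \<partial>lborel)
     \<le> (\<integral>\<^sup>+t. ennreal (f t) * indicator {t. \<bar>t\<bar> < r} t \<partial>lborel)"
  unfolding nn_integral_closed_interval_eq_open
proof -
  consider "b = 0" | "r \<le> 0" | "b \<noteq> 0" "0 < r" by fastforce
  then show "(\<integral>\<^sup>+t. ennreal (f t) * indicator {t. \<bar>t + b\<bar> < r} t \<partial>lborel)
      \<le> (\<integral>\<^sup>+t. ennreal (f t) * indicator {t. \<bar>t\<bar> < r} t \<partial>lborel)"
  proof cases
    case 2
    then have "{t. \<bar>t + b\<bar> < r} = {}" by auto
    then show ?thesis by simp
  qed (auto intro: less_imp_le nn_integral_shifted_interval_less)
qed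

lemma emeasure_scaled_sq_eq_nn_integral:
  assumes X: "distributed M lborel X f" and c: "0 < c"
  shows "emeasure M {\<omega> \<in> space M. (X \<omega> / c + b)\<^sup>2 \<le> s}
      = (\<integral>\<^sup>+t. ennreal (f t) * indicator {t. \<bar>t + b * c\<bar> \<le> c * sqrt s} t \<partial>lborel)"
    and "emeasure M {\<omega> \<in> space M. (X \<omega> / c)\<^sup>2 < s}
      = (\<integral>\<^sup>+t. ennreal (f t) * indicator {t. \<bar>t\<bar> < c * sqrt s} t \<partial>lborel)"
proof -
  have "(x / c + b)\<^sup>2 \<le> s \<longleftrightarrow> \<bar>x + b * c\<bar> \<le> c * sqrt s"
    "(x / c)\<^sup>2 < s \<longleftrightarrow> \<bar>x\<bar> < c * sqrt s" for x
    using c by (simp_all add: sq_le_iff_abs_le_sqrt sq_less_iff_abs_less_sqrt field_simps abs_divide real_sqrt_mult)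
  then show "emeasure M {\<omega> \<in> space M. (X \<omega> / c + b)\<^sup>2 \<le> s}
      = (\<integral>\<^sup>+t. ennreal (f t) * indicator {t. \<bar>t + b * c\<bar> \<le> c * sqrt s} t \<partial>lborel)"
    "emeasure M {\<omega> \<in> space M. (X \<omega> / c)\<^sup>2 < s}
      = (\<integral>\<^sup>+t. ennreal (f t) * indicator {t. \<bar>t\<bar> < c * sqrt s} t \<partial>lborel)"
    using emeasure_distributed_eq_nn_integral[OF X, of "\<lambda>t. \<bar>t + b * c\<bar> \<le> c * sqrt s"]
      emeasure_distributed_eq_nn_integral[OF X, of "\<lambda>t. \<bar>t\<bar> < c * sqrt s"]
    by simp_all
qed

lemma emeasure_shifted_sq_le:
  assumes "distributed M lborel X f" and "0 < c"
  shows "emeasure M {\<omega> \<in> space M. (X \<omega> / c + b)\<^sup>2 \<le> s}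
       \<le> emeasure M {\<omega> \<in> space M. (X \<omega> / c)\<^sup>2 < s}"
  unfolding emeasure_scaled_sq_eq_nn_integral[OF assms] by (rule nn_integral_shifted_interval_le)

lemma emeasure_shifted_sq_less:
  assumes "distributed M lborel X f" and "0 < c" and "b \<noteq> 0" and "0 < s"
  shows "emeasure M {\<omega> \<in> space M. (X \<omega> / c + b)\<^sup>2 \<le> s}
       < emeasure M {\<omega> \<in> space M. (X \<omega> / c)\<^sup>2 < s}"
  unfolding emeasure_scaled_sq_eq_nn_integral[OF assms(1,2)] nn_integral_closed_interval_eq_open
  using assms(2-4) by (intro nn_integral_shifted_interval_less) auto

end

interpretation std_normal: symmetric_unimodal_density std_normal_density
proof
  show "std_normal_density v < std_normal_density u" if "\<bar>u\<bar> < \<bar>v\<bar>" for u v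
  proof -
    have "u\<^sup>2 < v\<^sup>2" using that by (metis abs_le_square_iff not_le)
    then show ?thesis by (auto simp: std_normal_density_def intro!: divide_strict_right_mono)
  qed
qed (auto simp: std_normal_density_def)

section \<open>Series of weighted independent Gaussians\<close>

locale weighted_gaussian_series = prob_space M for M :: "'a measure" +
  fixes X :: "nat \<Rightarrow> 'a \<Rightarrow> real" and d :: "nat \<Rightarrow> real"
  assumes indep: "indep_vars (\<lambda>_. borel) X UNIV"
    and std_normal: "distributed M lborel (X k) std_normal_density"
    and weight_pos: "0 < d k"
    and summable_inverse_sq_weight: "summable (\<lambda>k. 1 / (d k)\<^sup>2)"
begin

lemma random_variable_X[measurable]: "X k \<in> borel_measurable M"
  using distributed_measurable[OF std_normal] by simp

definition shifted_sum :: "(nat \<Rightarrow> real) \<Rightarrow> nat \<Rightarrow> 'a \<Rightarrow> real" where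
  "shifted_sum a n \<omega> = (\<Sum>k<n. (X k \<omega> / d k + a k)\<^sup>2)"

definition shifted_suminf :: "(nat \<Rightarrow> real) \<Rightarrow> 'a \<Rightarrow> real" where
  "shifted_suminf a \<omega> = (\<Sum>k. (X k \<omega> / d k + a k)\<^sup>2)"

definition others :: "nat \<Rightarrow> 'a \<Rightarrow> nat \<Rightarrow> real" where
  "others k \<omega> = (\<lambda>i. X i \<omega>)(k := 0)"

lemma borel_measurable_shifted_sum[measurable]: "shifted_sum a n \<in> borel_measurable M"
  unfolding shifted_sum_def by measurable

lemma borel_measurable_shifted_suminf[measurable]: "shifted_suminf a \<in> borel_measurable M"
  unfolding shifted_suminf_def by measurable

lemma measurable_others[measurable]: "others k \<in> measurable M (PiM UNIV (\<lambda>_. borel))"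
  unfolding others_def by (rule measurable_PiM_single') auto

text \<open>\<open>indep_var\<close> needs both variables to take values in the same type, so \<open>X k\<close> enters as
  the function \<open>\<lambda>i\<in>{k}. X i \<omega>\<close>.\<close>

lemma indep_var_others:
  "indep_var (PiM UNIV (\<lambda>_. borel)) (others k) (PiM {k} (\<lambda>_. borel)) (\<lambda>\<omega>. restrict (\<lambda>i. X i \<omega>) {k})"
proof -
  have "indep_var (PiM UNIV (\<lambda>_. borel)) ((\<lambda>f. f(k := 0)) \<circ> (\<lambda>\<omega>. restrict (\<lambda>i. X i \<omega>) (UNIV - {k})))
      (PiM {k} (\<lambda>_. borel)) (id \<circ> (\<lambda>\<omega>. restrict (\<lambda>i. X i \<omega>) {k}))"
  proof (rule indep_var_compose[OF indep_var_restrict[OF indep]])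
    show "(\<lambda>f. f(k := 0)) \<in> measurable (PiM (UNIV - {k}) (\<lambda>_. borel)) (PiM UNIV (\<lambda>_. borel :: real measure))"
    proof (rule measurable_PiM_single')
      show "(\<lambda>f. (f(k := 0)) i) \<in> borel_measurable (PiM (UNIV - {k}) (\<lambda>_. borel))" for i
        by (cases "i = k") auto
    qed auto
  qed auto
  also have "(\<lambda>f. f(k := 0)) \<circ> (\<lambda>\<omega>. restrict (\<lambda>i. X i \<omega>) (UNIV - {k})) = others k"
    by (auto simp: others_def fun_eq_iff)
  finally show ?thesis by (simp add: restrict_def)
qed

lemma emeasure_shift_coordinate_eq_nn_integral:
  assumes [measurable]: "R \<in> borel_measurable (PiM UNIV (\<lambda>_. borel))"
  shows "emeasure M {\<omega> \<in> space M. (X k \<omega> / d k + b)\<^sup>2 + R (others k \<omega>) \<le> x}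
      = (\<integral>\<^sup>+w. emeasure M {\<omega> \<in> space M. (X k \<omega> / d k + b)\<^sup>2 \<le> x - R w}
          \<partial>distr M (PiM UNIV (\<lambda>_. borel)) (others k))"
    and "emeasure M {\<omega> \<in> space M. (X k \<omega> / d k)\<^sup>2 + R (others k \<omega>) < x}
      = (\<integral>\<^sup>+w. emeasure M {\<omega> \<in> space M. (X k \<omega> / d k)\<^sup>2 < x - R w}
          \<partial>distr M (PiM UNIV (\<lambda>_. borel)) (others k))"
  using emeasure_indep_var_eq_nn_integral[OF indep_var_others[of k],
      where Q = "\<lambda>w z. (z k / d k + b)\<^sup>2 \<le> x - R w"]
    emeasure_indep_var_eq_nn_integral[OF indep_var_others[of k], where Q = "\<lambda>w z. (z k / d k)\<^sup>2 < x - R w"]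
  by (simp_all add: le_diff_eq less_diff_eq)

lemma emeasure_unshift_coordinate_le:
  assumes "R \<in> borel_measurable (PiM UNIV (\<lambda>_. borel))"
  shows "emeasure M {\<omega> \<in> space M. (X k \<omega> / d k + b)\<^sup>2 + R (others k \<omega>) \<le> x}
       \<le> emeasure M {\<omega> \<in> space M. (X k \<omega> / d k)\<^sup>2 + R (others k \<omega>) < x}"
  unfolding emeasure_shift_coordinate_eq_nn_integral[OF assms]
  by (intro nn_integral_mono std_normal.emeasure_shifted_sq_le std_normal weight_pos)

lemma emeasure_unshift_coordinate_less:
  assumes R[measurable]: "R \<in> borel_measurable (PiM UNIV (\<lambda>_. borel))"
    and b: "b \<noteq> 0" and pos: "emeasure M {\<omega> \<in> space M. R (others k \<omega>) < x} \<noteq> 0"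
  shows "emeasure M {\<omega> \<in> space M. (X k \<omega> / d k + b)\<^sup>2 + R (others k \<omega>) \<le> x}
       < emeasure M {\<omega> \<in> space M. (X k \<omega> / d k)\<^sup>2 + R (others k \<omega>) < x}"
proof -
  define F where "F s = measure M {\<omega> \<in> space M. (X k \<omega> / d k + b)\<^sup>2 \<le> s}" for s
  define G where "G s = measure M {\<omega> \<in> space M. (X k \<omega> / d k)\<^sup>2 < s}" for s
  have [measurable]: "F \<in> borel_measurable borel" "G \<in> borel_measurable borel"
    unfolding F_def G_def by (auto intro!: borel_measurable_mono monoI finite_measure_mono)
  have F_eq: "emeasure M {\<omega> \<in> space M. (X k \<omega> / d k + b)\<^sup>2 \<le> s} = ennreal (F s)" for s
    by (simp add: F_def emeasure_eq_measure)
  have G_eq: "emeasure M {\<omega> \<in> space M. (X k \<omega> / d k)\<^sup>2 < s} = ennreal (G s)" for s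
    by (simp add: G_def emeasure_eq_measure)
  let ?D = "distr M (PiM UNIV (\<lambda>_. borel)) (others k)"
  let ?A = "{w \<in> space (PiM UNIV (\<lambda>_. borel)). R w < x}"
  show ?thesis
    unfolding emeasure_shift_coordinate_eq_nn_integral[OF R] F_eq G_eq
  proof (rule nn_integral_strict_mono_on_set[where A = ?A])
    show "ennreal (F (x - R w)) \<le> ennreal (G (x - R w))" for w
      using std_normal.emeasure_shifted_sq_le[OF std_normal[of k] weight_pos[of k], of b "x - R w"] by (simp add: F_eq G_eq)
    show "ennreal (F (x - R w)) < ennreal (G (x - R w))" if "w \<in> ?A" for w
      using std_normal.emeasure_shifted_sq_less[OF std_normal[of k] weight_pos[of k] b, of "x - R w"] that by (simp add: F_eq G_eq)
    have "emeasure ?D ?A = emeasure M {\<omega> \<in> space M. R (others k \<omega>) < x}"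
      using measurable_space[OF measurable_others] by (subst emeasure_distr) (auto intro!: arg_cong[where f = "emeasure M"])
    then show "emeasure ?D ?A \<noteq> 0" using pos by simp
    interpret D: prob_space ?D by (rule prob_space_distr) simp
    have "(\<integral>\<^sup>+w. ennreal (F (x - R w)) \<partial>?D) \<le> (\<integral>\<^sup>+w. 1 \<partial>?D)"
      by (intro nn_integral_mono) (simp add: F_def)
    then show "(\<integral>\<^sup>+w. ennreal (F (x - R w)) \<partial>?D) \<noteq> \<infinity>"
      by (auto simp: D.emeasure_space_1 top_unique)
  qed auto
qed


lemma AE_X_nonzero: "AE \<omega> in M. X k \<omega> \<noteq> 0"
proof -
  have "emeasure M {\<omega> \<in> space M. X k \<omega> = 0}
      = (\<integral>\<^sup>+t. ennreal (std_normal_density t) * indicator {t. t = 0} t \<partial>lborel)"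
    by (rule emeasure_distributed_eq_nn_integral[OF std_normal]) simp
  also have "\<dots> = 0"
    using AE_lborel_singleton[of 0] by (subst nn_integral_0_iff_AE) (auto elim!: eventually_mono)
  finally show ?thesis by (subst AE_iff_measurable[OF _ refl]) auto
qed

lemma AE_summable_scaled_sq: "AE \<omega> in M. summable (\<lambda>k. (X k \<omega> / d k)\<^sup>2)"
proof -
  have second_moment: "(\<integral>\<^sup>+\<omega>. ennreal ((X k \<omega>)\<^sup>2) \<partial>M) = 1" for k
  proof -
    have "(\<integral>\<^sup>+\<omega>. ennreal ((X k \<omega>)\<^sup>2) \<partial>M)
        = (\<integral>\<^sup>+t. ennreal (std_normal_density t * t ^ (2 * 1)) \<partial>lborel)"
      by (subst distributed_nn_integral[OF std_normal, symmetric]) (auto simp: ennreal_mult)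
    also have "\<dots> = ennreal (integral\<^sup>L lborel (\<lambda>t. std_normal_density t * t ^ (2 * 1)))"
      by (intro nn_integral_eq_integral integrable_std_normal_moment) auto
    also have "\<dots> = 1" by (simp only: integral_std_normal_moment_even) simp
    finally show ?thesis .
  qed
  have "(\<integral>\<^sup>+\<omega>. (\<Sum>k. ennreal ((X k \<omega> / d k)\<^sup>2)) \<partial>M)
      = (\<Sum>k. \<integral>\<^sup>+\<omega>. ennreal ((X k \<omega> / d k)\<^sup>2) \<partial>M)"
    by (rule nn_integral_suminf) measurable
  also have "\<dots> = (\<Sum>k. ennreal (1 / (d k)\<^sup>2))"
  proof (rule suminf_cong)
    fix k
    have "(\<integral>\<^sup>+\<omega>. ennreal ((X k \<omega> / d k)\<^sup>2) \<partial>M)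
        = (\<integral>\<^sup>+\<omega>. ennreal (1 / (d k)\<^sup>2) * ennreal ((X k \<omega>)\<^sup>2) \<partial>M)"
      by (intro nn_integral_cong) (simp add: ennreal_mult[symmetric] power_divide)
    then show "(\<integral>\<^sup>+\<omega>. ennreal ((X k \<omega> / d k)\<^sup>2) \<partial>M) = ennreal (1 / (d k)\<^sup>2)"
      by (simp add: nn_integral_cmult second_moment)
  qed
  also have "\<dots> = ennreal (\<Sum>k. 1 / (d k)\<^sup>2)"
    by (rule suminf_ennreal2) (auto intro: summable_inverse_sq_weight)
  finally have "(\<integral>\<^sup>+\<omega>. (\<Sum>k. ennreal ((X k \<omega> / d k)\<^sup>2)) \<partial>M) \<noteq> \<infinity>" by simp
  then have "AE \<omega> in M. (\<Sum>k. ennreal ((X k \<omega> / d k)\<^sup>2)) \<noteq> \<infinity>"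
    by (intro nn_integral_PInf_AE) measurable
  then show ?thesis
    by eventually_elim (rule summable_suminf_not_top, auto)
qed

lemma AE_summable_shifted_sq:
  assumes a: "summable (\<lambda>k. (a k)\<^sup>2)"
  shows "AE \<omega> in M. summable (\<lambda>k. (X k \<omega> / d k + a k)\<^sup>2)"
  using AE_summable_scaled_sq
proof eventually_elim
  case (elim \<omega>)
  have sq_sum_le: "(y + c)\<^sup>2 \<le> 2 * y\<^sup>2 + 2 * c\<^sup>2" for y c :: real
    using zero_le_power2[of "y - c"] unfolding power2_eq_square by (simp add: algebra_simps)
  show ?case
  proof (rule summable_comparison_test')
    show "summable (\<lambda>k. 2 * (X k \<omega> / d k)\<^sup>2 + 2 * (a k)\<^sup>2)"
      using elim a by (intro summable_add summable_mult)
    show "norm ((X k \<omega> / d k + a k)\<^sup>2) \<le> 2 * (X k \<omega> / d k)\<^sup>2 + 2 * (a k)\<^sup>2" for k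
      using sq_sum_le by simp
  qed
qed

lemma shifted_sum_eq_coordinate_plus_others:
  assumes "k < n"
  shows "shifted_sum a n \<omega> = (X k \<omega> / d k + a k)\<^sup>2 + (\<Sum>i\<in>{..<n} - {k}. (others k \<omega> i / d i + a i)\<^sup>2)"
  unfolding shifted_sum_def using assms
  by (subst sum.remove[of _ k]) (auto simp: others_def intro!: sum.cong)

lemma emeasure_shifted_sum_unshift_coordinate:
  "emeasure M {\<omega> \<in> space M. shifted_sum a n \<omega> < x}
     \<le> emeasure M {\<omega> \<in> space M. shifted_sum (a(k := 0)) n \<omega> < x}"
proof (cases "k < n")
  case True
  define R where "R w = (\<Sum>i\<in>{..<n} - {k}. (w i / d i + a i)\<^sup>2)" for w :: "nat \<Rightarrow> real"
  have [measurable]: "R \<in> borel_measurable (PiM UNIV (\<lambda>_. borel))" unfolding R_def by measurable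
  have R_unshift: "(\<Sum>i\<in>{..<n} - {k}. (w i / d i + (a(k := 0)) i)\<^sup>2) = R w" for w
    unfolding R_def by (intro sum.cong) auto
  have "emeasure M {\<omega> \<in> space M. shifted_sum a n \<omega> < x}
      \<le> emeasure M {\<omega> \<in> space M. (X k \<omega> / d k + a k)\<^sup>2 + R (others k \<omega>) \<le> x}"
    using True by (intro emeasure_mono) (auto simp: shifted_sum_eq_coordinate_plus_others R_def)
  also have "\<dots> \<le> emeasure M {\<omega> \<in> space M. (X k \<omega> / d k)\<^sup>2 + R (others k \<omega>) < x}"
    by (rule emeasure_unshift_coordinate_le) measurable
  also have "{\<omega> \<in> space M. (X k \<omega> / d k)\<^sup>2 + R (others k \<omega>) < x}
      = {\<omega> \<in> space M. shifted_sum (a(k := 0)) n \<omega> < x}"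
    using True by (auto simp: shifted_sum_eq_coordinate_plus_others R_unshift fun_upd_same simp del: fun_upd_apply)
  finally show ?thesis .
next
  case False
  then have "shifted_sum (a(k := 0)) n = shifted_sum a n"
    unfolding shifted_sum_def by (intro ext sum.cong) auto
  then show ?thesis by simp
qed

lemma emeasure_shifted_sum_unshift_finite:
  assumes "finite F"
  shows "emeasure M {\<omega> \<in> space M. shifted_sum a n \<omega> < x}
     \<le> emeasure M {\<omega> \<in> space M. shifted_sum (\<lambda>i. if i \<in> F then 0 else a i) n \<omega> < x}"
  using assms
proof (induction F rule: finite_induct)
  case (insert k F)
  have "(\<lambda>i. if i \<in> insert k F then 0 else a i) = (\<lambda>i. if i \<in> F then 0 else a i)(k := 0)"
    by auto
  then show ?case
    using insert.IH emeasure_shifted_sum_unshift_coordinate[of "\<lambda>i. if i \<in> F then 0 else a i" n x k]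
    by simp
qed simp

lemma emeasure_shifted_suminf_le_single_shift:
  assumes a: "summable (\<lambda>k. (a k)\<^sup>2)"
  shows "emeasure M {\<omega> \<in> space M. shifted_suminf a \<omega> < x}
     \<le> emeasure M {\<omega> \<in> space M. shifted_suminf ((\<lambda>_. 0)(j := a j)) \<omega> \<le> x}"
proof -
  define a' where "a' = (\<lambda>_. 0 :: real)(j := a j)"
  define E where "E n = {\<omega> \<in> space M. shifted_sum a' n \<omega> < x}" for n
  have E_sets[measurable]: "E n \<in> sets M" for n unfolding E_def by measurable
  have le_E: "emeasure M {\<omega> \<in> space M. shifted_suminf a \<omega> < x} \<le> emeasure M (E n)" for n
  proof -
    have "emeasure M {\<omega> \<in> space M. shifted_suminf a \<omega> < x}
        \<le> emeasure M {\<omega> \<in> space M. shifted_sum a n \<omega> < x}"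
    proof (rule emeasure_mono_AE)
      show "AE \<omega> in M. \<omega> \<in> {\<omega> \<in> space M. shifted_suminf a \<omega> < x}
          \<longrightarrow> \<omega> \<in> {\<omega> \<in> space M. shifted_sum a n \<omega> < x}"
        using AE_summable_shifted_sq[OF a]
      proof eventually_elim
        case (elim \<omega>)
        then have "shifted_sum a n \<omega> \<le> shifted_suminf a \<omega>"
          unfolding shifted_sum_def shifted_suminf_def by (intro sum_le_suminf) auto
        then show ?case by auto
      qed
    qed measurable
    also have "\<dots> \<le> emeasure M {\<omega> \<in> space M. shifted_sum (\<lambda>i. if i \<in> {..<n} - {j} then 0 else a i) n \<omega> < x}"
      by (rule emeasure_shifted_sum_unshift_finite) simp
    also have "shifted_sum (\<lambda>i. if i \<in> {..<n} - {j} then 0 else a i) n = shifted_sum a' n"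
      unfolding shifted_sum_def a'_def by (intro ext sum.cong) auto
    finally show ?thesis unfolding E_def .
  qed
  have "decseq E"
  proof (rule decseq_SucI)
    have "shifted_sum a' n \<omega> \<le> shifted_sum a' (Suc n) \<omega>" for n \<omega>
      by (simp add: shifted_sum_def)
    then show "E (Suc n) \<subseteq> E n" for n
      unfolding E_def by (auto intro: le_less_trans)
  qed
  have Inter_E: "(\<Inter>n. E n) \<subseteq> {\<omega> \<in> space M. shifted_suminf a' \<omega> \<le> x}"
  proof
    fix \<omega> assume "\<omega> \<in> (\<Inter>n. E n)"
    then have \<omega>: "\<omega> \<in> space M" and bound: "shifted_sum a' n \<omega> \<le> x" for n
      unfolding E_def by (auto intro: less_imp_le)
    have "summable (\<lambda>k. (X k \<omega> / d k + a' k)\<^sup>2)"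
      using bound[of "Suc n" for n]
      by (intro bounded_imp_summable[where B = x]) (auto simp: shifted_sum_def lessThan_Suc_atMost)
    then have "shifted_suminf a' \<omega> \<le> x"
      unfolding shifted_suminf_def using bound by (intro suminf_le_const) (auto simp: shifted_sum_def)
    then show "\<omega> \<in> {\<omega> \<in> space M. shifted_suminf a' \<omega> \<le> x}" using \<omega> by simp
  qed
  have "emeasure M {\<omega> \<in> space M. shifted_suminf a \<omega> < x} \<le> (INF n. emeasure M (E n))"
    by (rule INF_greatest) (rule le_E)
  also have "\<dots> = emeasure M (\<Inter>n. E n)"
    using \<open>decseq E\<close> by (intro INF_emeasure_decseq) auto
  also have "\<dots> \<le> emeasure M {\<omega> \<in> space M. shifted_suminf a' \<omega> \<le> x}"
    using Inter_E by (rule emeasure_mono) measurable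
  finally show ?thesis unfolding a'_def .
qed

lemma shifted_suminf_single_shift_eq:
  assumes "summable (\<lambda>k. (X k \<omega> / d k)\<^sup>2)"
  shows "shifted_suminf ((\<lambda>_. 0)(j := b)) \<omega> = (X j \<omega> / d j + b)\<^sup>2 + (\<Sum>i. (others j \<omega> i / d i)\<^sup>2)"
proof -
  define g where "g i = (X i \<omega> / d i + ((\<lambda>_. 0)(j := b)) i)\<^sup>2" for i
  have g_upd: "g(j := 0) = (\<lambda>i. (others j \<omega> i / d i)\<^sup>2)" "g(j := 0) = (\<lambda>k. (X k \<omega> / d k)\<^sup>2)(j := 0)"
    by (auto simp: g_def others_def)
  have "summable g"
    using assms summable_fun_upd_iff[of g j 0] summable_fun_upd_iff[of "\<lambda>k. (X k \<omega> / d k)\<^sup>2" j 0]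
    by (simp add: g_upd(2))
  then show ?thesis
    using suminf_eq_add_suminf_fun_upd_zero[of g j] unfolding shifted_suminf_def g_upd(1)
    by (simp add: g_def[abs_def])
qed

lemma emeasure_single_shift_less:
  assumes b: "b \<noteq> 0" and pos: "emeasure M {\<omega> \<in> space M. shifted_suminf (\<lambda>_. 0) \<omega> \<le> x} \<noteq> 0"
  shows "emeasure M {\<omega> \<in> space M. shifted_suminf ((\<lambda>_. 0)(j := b)) \<omega> \<le> x}
       < emeasure M {\<omega> \<in> space M. shifted_suminf (\<lambda>_. 0) \<omega> < x}"
proof -
  define h where "h w = (\<Sum>i. (w i / d i)\<^sup>2)" for w :: "nat \<Rightarrow> real"
  have [measurable]: "h \<in> borel_measurable (PiM UNIV (\<lambda>_. borel))" unfolding h_def by measurable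
  have split: "AE \<omega> in M.
      shifted_suminf ((\<lambda>_. 0)(j := c)) \<omega> = (X j \<omega> / d j + c)\<^sup>2 + h (others j \<omega>)" for c
    using AE_summable_scaled_sq by eventually_elim (simp add: h_def shifted_suminf_single_shift_eq)
  have unshifted: "(\<lambda>_. 0 :: real)(j := 0) = (\<lambda>_. 0)" by auto
  have "emeasure M {\<omega> \<in> space M. shifted_suminf ((\<lambda>_. 0)(j := b)) \<omega> \<le> x}
      = emeasure M {\<omega> \<in> space M. (X j \<omega> / d j + b)\<^sup>2 + h (others j \<omega>) \<le> x}"
    using split[of b] by (intro emeasure_eq_AE) auto
  also have "\<dots> < emeasure M {\<omega> \<in> space M. (X j \<omega> / d j)\<^sup>2 + h (others j \<omega>) < x}"
  proof (rule emeasure_unshift_coordinate_less[OF _ b])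
    have "emeasure M {\<omega> \<in> space M. shifted_suminf (\<lambda>_. 0) \<omega> \<le> x}
        \<le> emeasure M {\<omega> \<in> space M. h (others j \<omega>) < x}"
    proof (rule emeasure_mono_AE)
      show "AE \<omega> in M. \<omega> \<in> {\<omega> \<in> space M. shifted_suminf (\<lambda>_. 0) \<omega> \<le> x}
          \<longrightarrow> \<omega> \<in> {\<omega> \<in> space M. h (others j \<omega>) < x}"
        using split[of 0] AE_X_nonzero[of j]
      proof eventually_elim
        case (elim \<omega>)
        have "0 < (X j \<omega> / d j)\<^sup>2" using elim(2) weight_pos[of j] by simp
        then have "h (others j \<omega>) < shifted_suminf (\<lambda>_. 0) \<omega>"
          using elim(1) unfolding unshifted by simp
        then show ?case by auto
      qed
    qed measurable
    then show "emeasure M {\<omega> \<in> space M. h (others j \<omega>) < x} \<noteq> 0" using pos by auto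
  qed measurable
  also have "\<dots> = emeasure M {\<omega> \<in> space M. shifted_suminf (\<lambda>_. 0) \<omega> < x}"
    using split[of 0] unfolding unshifted by (intro emeasure_eq_AE) auto
  finally show ?thesis .
qed

theorem emeasure_shifted_suminf_less:
  assumes "summable (\<lambda>k. (a k)\<^sup>2)" and "a j \<noteq> 0"
    and "emeasure M {\<omega> \<in> space M. shifted_suminf (\<lambda>_. 0) \<omega> \<le> x} \<noteq> 0"
  shows "emeasure M {\<omega> \<in> space M. shifted_suminf a \<omega> < x}
       < emeasure M {\<omega> \<in> space M. shifted_suminf (\<lambda>_. 0) \<omega> < x}"
  using emeasure_shifted_suminf_le_single_shift[OF assms(1)] emeasure_single_shift_less[OF assms(2,3)]
  by (rule le_less_trans)

corollary prob_shifted_suminf_less: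
  assumes "summable (\<lambda>k. (a k)\<^sup>2)" and "a \<noteq> (\<lambda>_. 0)"
    and "prob {\<omega> \<in> space M. shifted_suminf (\<lambda>_. 0) \<omega> > x} < 1"
  shows "prob {\<omega> \<in> space M. shifted_suminf a \<omega> < x}
       < prob {\<omega> \<in> space M. shifted_suminf (\<lambda>_. 0) \<omega> < x}"
proof -
  obtain j where "a j \<noteq> 0" using assms(2) by auto
  have "{\<omega> \<in> space M. shifted_suminf (\<lambda>_. 0) \<omega> \<le> x}
      = space M - {\<omega> \<in> space M. shifted_suminf (\<lambda>_. 0) \<omega> > x}"
    by auto
  then have "prob {\<omega> \<in> space M. shifted_suminf (\<lambda>_. 0) \<omega> \<le> x}
      = 1 - prob {\<omega> \<in> space M. shifted_suminf (\<lambda>_. 0) \<omega> > x}"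
    by (simp add: prob_compl)
  then have "emeasure M {\<omega> \<in> space M. shifted_suminf (\<lambda>_. 0) \<omega> \<le> x} \<noteq> 0"
    using assms(3) by (simp add: emeasure_eq_measure)
  from emeasure_shifted_suminf_less[OF assms(1) \<open>a j \<noteq> 0\<close> this] show ?thesis
    by (simp add: emeasure_eq_measure ennreal_less_iff)
qed

end

lemma weighted_gaussian_series_Suc:
  assumes M: "prob_space M" and indep: "prob_space.indep_vars M (\<lambda>_. borel) \<xi> {1..}"
    and std_normal: "\<And>j. j \<ge> 1 \<Longrightarrow> distributed M lborel (\<xi> j) std_normal_density"
  shows "weighted_gaussian_series M (\<lambda>k. \<xi> (Suc k)) (\<lambda>k. real (Suc k))"
proof (intro weighted_gaussian_series.intro[OF M] weighted_gaussian_series_axioms.intro)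
  have "range Suc = {1..}" by (auto simp: image_iff Suc_le_D)
  then show "prob_space.indep_vars M (\<lambda>_. borel) (\<lambda>k. \<xi> (Suc k)) UNIV"
    using prob_space.indep_vars_reindex[OF M, of Suc UNIV "\<lambda>_. borel" \<xi>] indep by simp
  show "distributed M lborel (\<xi> (Suc k)) std_normal_density" for k
    using std_normal by simp
  have "summable (\<lambda>k. inverse (real k ^ 2))" by (rule inverse_power_summable) simp
  then show "summable (\<lambda>k. 1 / (real (Suc k))\<^sup>2)"
    by (subst summable_Suc_iff) (simp add: divide_inverse)
qed simp

theorem lemma14:
  fixes M :: "'a measure" and \<xi> :: "nat \<Rightarrow> 'a \<Rightarrow> real"
    and \<alpha> x\<^sub>\<alpha> c :: real and \<eta> :: "nat \<Rightarrow> real"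
  assumes "prob_space M"
    and "prob_space.indep_vars M (\<lambda>_. borel) \<xi> {1..}"
    and "\<And>j. j \<ge> 1 \<Longrightarrow> distributed M lborel (\<xi> j) std_normal_density"
    and "0 < \<alpha>" and "\<alpha> < 1"
    and "measure M {\<omega> \<in> space M. shifted_series \<xi> (\<lambda>_. 0) \<omega> > x\<^sub>\<alpha>} = \<alpha>"
    and "summable (\<lambda>k. (\<eta> (Suc k))\<^sup>2)"
    and "c > 0"
    and "(1 / pi\<^sup>2) * (\<Sum>k. (\<eta> (Suc k))\<^sup>2) > c"
  shows "measure M {\<omega> \<in> space M. shifted_series \<xi> (\<lambda>_. 0) \<omega> < x\<^sub>\<alpha>}
       > measure M {\<omega> \<in> space M. shifted_series \<xi> \<eta> \<omega> < x\<^sub>\<alpha>}"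
proof -
  interpret weighted_gaussian_series M "\<lambda>k. \<xi> (Suc k)" "\<lambda>k. real (Suc k)"
    using assms(1-3) by (rule weighted_gaussian_series_Suc)
  have series_eq: "shifted_series \<xi> b \<omega> = shifted_suminf (\<lambda>k. b (Suc k)) \<omega> / pi\<^sup>2" for b \<omega>
    unfolding shifted_series_def shifted_suminf_def by simp
  have "(\<lambda>k. \<eta> (Suc k)) \<noteq> (\<lambda>_. 0)"
  proof
    assume "(\<lambda>k. \<eta> (Suc k)) = (\<lambda>_. 0)"
    then have "(\<Sum>k. (\<eta> (Suc k))\<^sup>2) = 0" by (simp add: fun_eq_iff)
    with assms(8,9) show False by simp
  qed
  then show ?thesis
    using prob_shifted_suminf_less[of "\<lambda>k. \<eta> (Suc k)" "pi\<^sup>2 * x\<^sub>\<alpha>"] assms(5-7)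
    by (simp add: series_eq pos_divide_less_eq pos_less_divide_eq mult.commute)
qed

end
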